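(* Consider the C2L model described in the context, and fix a time step $t$ and an earlier time step $k<t$. Work at the population level (infinite sample size). Assume the probability densities of $s_k$ and of every latent confounder $u_j$ are twice differentiable and strictly positive on $(-\infty,\infty)$. If $s_k$ is a valid instrumental variable relative to the causal relation $s_t\to a_t$, then $\{s_t, a_t \,\|\, s_k\}$ satisfies the AB Criterion.
   Context: C2L (Confounded Causal Imitation Learning) model: real-valued states $s_t$ and actions $a_t$ are generated by the structural equations $s_t = P(s_{t-1}, a_{t-1}) + e_{s_t}$, $\quad a_t = \pi(s_t) + h(u_t, u_{t-1}, \dots, u_{t-\tau}) + e_{a_t}$, where $P$ is the transition function, $\pi$ is the (unknown) policy, $h$ is a deterministic function, $\tau\ge 1$ is an unknown integer, the $u_j$ are unobserved latent confounders (each $u_j$ thus affects the actions $a_j, a_{j+1},\dots,a_{j+\tau}$, and affects later states through these actions and $P$), and the noise terms $e_{s_t}, e_{a_t}$ are mutually independent and independent of all confounders. Only states and actions are observed. Valid IV: a candidate $s_k$ is a valid instrumental variable relative to $s_t\to a_t$ if (A1, relevance) $s_k$ is statistically associated with the treatment $s_t$; (A2, exclusion restriction) $s_k$ has no directed causal path to $a_t$ other than through $s_t$; (A3, exogeneity) $s_k$ is independent of the latent confounders affecting $a_t$ (i.e., of $u_t,\dots,u_{t-\tau}$). AB Criterion: define the auxiliary residual $\mathcal{R}_{s_t,a_t\|s_k} := a_t - l(s_t)$, where the function $l\neq 0$ is chosen so that $\mathbb{E}[\mathcal{R}_{s_t,a_t\|s_k}\mid s_k]=0$. Then $\{s_t,a_t\|s_k\}$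 satisfies the AB Criterion if and only if $\mathcal{R}_{s_t,a_t\|s_k}$ is statistically independent of $s_k$. *)

theory Defs
  imports "HOL-Probability.Probability"
begin

datatype node = S nat | A nat | U int

fun c2l_edge :: "nat \<Rightarrow> node \<Rightarrow> node \<Rightarrow> bool" where
  "c2l_edge \<tau> (S i) (S j) = (j = Suc i)"
| "c2l_edge \<tau> (A i) (S j) = (j = Suc i)"
| "c2l_edge \<tau> (S i) (A j) = (i = j)"
| "c2l_edge \<tau> (U i) (A j) = (i \<le> int j \<and> int j \<le> i + int \<tau>)"
| "c2l_edge \<tau> _ _ = False"

definition path_avoiding :: "nat \<Rightarrow> node \<Rightarrow> node \<Rightarrow> node \<Rightarrow> bool" where
  "path_avoiding \<tau> z x y \<longleftrightarrow>
     (\<lambda>p q. c2l_edge \<tau> p q \<and> p \<noteq> z \<and> q \<noteq> z)\<^sup>+\<^sup>+ x y"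

definition twice_differentiable :: "(real \<Rightarrow> real) \<Rightarrow> bool" where
  "twice_differentiable f \<longleftrightarrow>
     (\<exists>f'. \<forall>x. (f has_real_derivative f' x) (at x) \<and> f' differentiable (at x))"

definition smooth_pos_density :: "'a measure \<Rightarrow> ('a \<Rightarrow> real) \<Rightarrow> bool" where
  "smooth_pos_density M X \<longleftrightarrow>
     (\<exists>f. distributed M lborel X (\<lambda>x. ennreal (f x)) \<and> (\<forall>x. f x > 0) \<and> twice_differentiable f)"

text \<open>The confounders affecting a_t: the block (u_t, u_{t-1}, ..., u_{t-tau}), as a random vector
  indexed by the lag i = 0..tau (component i is u_{t-i}).\<close>
definition conf_block :: "(int \<Rightarrow> 'a \<Rightarrow> real) \<Rightarrow> nat \<Rightarrow> nat \<Rightarrow> 'a \<Rightarrow> nat \<Rightarrow> real" where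
  "conf_block u \<tau> t = (\<lambda>\<omega>. \<lambda>i\<in>{..\<tau>}. u (int t - int i) \<omega>)"

definition conf_space :: "nat \<Rightarrow> (nat \<Rightarrow> real) measure" where
  "conf_space \<tau> = PiM {..\<tau>} (\<lambda>_. borel)"

definition indep_rv :: "'a measure \<Rightarrow> 'b measure \<Rightarrow> ('a \<Rightarrow> 'b) \<Rightarrow> 'c measure \<Rightarrow> ('a \<Rightarrow> 'c) \<Rightarrow> bool" where
  "indep_rv M Ma X Mb Y \<longleftrightarrow>
     X \<in> measurable M Ma \<and> Y \<in> measurable M Mb \<and>
     prob_space.indep_set M (sets (vimage_algebra (space M) X Ma)) (sets (vimage_algebra (space M) Y Mb))"

text \<open>Valid instrumental variable s_k relative to s_t -> a_t (conditions A1, A2, A3).\<close>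
definition valid_IV ::
  "'a measure \<Rightarrow> (nat \<Rightarrow> 'a \<Rightarrow> real) \<Rightarrow> (int \<Rightarrow> 'a \<Rightarrow> real) \<Rightarrow> nat \<Rightarrow> nat \<Rightarrow> nat \<Rightarrow> bool" where
  "valid_IV M s u \<tau> k t \<longleftrightarrow>
     \<not> prob_space.indep_var M borel (s k) borel (s t)
   \<and> \<not> path_avoiding \<tau> (S t) (S k) (A t)
   \<and> indep_rv M borel (s k) (conf_space \<tau>) (conf_block u \<tau> t)"

definition AB_criterion :: "'a measure \<Rightarrow> ('a \<Rightarrow> real) \<Rightarrow> ('a \<Rightarrow> real) \<Rightarrow> ('a \<Rightarrow> real) \<Rightarrow> bool" where
  "AB_criterion M st act sk \<longleftrightarrow>
     (\<exists>l :: real \<Rightarrow> real. l \<in> borel_measurable borel \<and> l \<noteq> (\<lambda>_. 0)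
        \<and> integrable M (\<lambda>\<omega>. act \<omega> - l (st \<omega>))
        \<and> (AE \<omega> in M. real_cond_exp M (vimage_algebra (space M) sk borel)
                          (\<lambda>\<omega>. act \<omega> - l (st \<omega>)) \<omega> = 0)
        \<and> prob_space.indep_var M borel sk borel (\<lambda>\<omega>. act \<omega> - l (st \<omega>)))"

end

theory Submission
  imports Defs
begin

text \<open>
  Since \<open>k < t\<close>, unrolling the structural equations writes \<open>s\<^sub>k\<close> as a measurable function of the
  confounders and of all noise terms except \<open>e\<^sub>a\<^sub>t\<close>. The noises are mutually independent and
  independent of the confounders, so \<open>e\<^sub>a\<^sub>t\<close> is independent of \<open>s\<^sub>k\<close> together with the confounder
  block \<open>(u\<^sub>t, \<dots>, u\<^sub>t\<^sub>-\<^sub>\<tau>)\<close>; combined with exogeneity (A3), \<open>s\<^sub>k\<close> is independent of the pair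
  (confounder block, \<open>e\<^sub>a\<^sub>t\<close>). With \<open>l = \<pi> + c\<close>, \<open>c\<close> the mean of \<open>h(u\<^sub>t, \<dots>) + e\<^sub>a\<^sub>t\<close>, the residual
  \<open>a\<^sub>t - l(s\<^sub>t) = h(u\<^sub>t, \<dots>) + e\<^sub>a\<^sub>t - c\<close> is centred and independent of \<open>s\<^sub>k\<close>, hence has conditional
  expectation zero given \<open>s\<^sub>k\<close>. Should \<open>\<pi> + c\<close> vanish identically, the requirement \<open>l \<noteq> 0\<close> is met
  by changing \<open>l\<close> at a value that \<open>s\<^sub>t\<close> takes with probability zero.
\<close>

lemma sets_vimage_algebra_compose:
  assumes X: "X \<in> measurable M N" and f: "f \<in> measurable N N'"
    and X': "\<And>\<omega>. \<omega> \<in> space M \<Longrightarrow> X' \<omega> = f (X \<omega>)"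
  shows "sets (vimage_algebra (space M) X' N') \<subseteq> sets (vimage_algebra (space M) X N)"
proof (rule sets_image_in_sets)
  have "X \<in> space M \<rightarrow> space N"
    using X by (auto dest: measurable_space)
  then have "(\<lambda>\<omega>. f (X \<omega>)) \<in> measurable (vimage_algebra (space M) X N) N'"
    using measurable_comp[OF measurable_vimage_algebra1 f] by (simp add: comp_def)
  then show "X' \<in> measurable (vimage_algebra (space M) X N) N'"
    using X' by (subst measurable_cong[where g="\<lambda>\<omega>. f (X \<omega>)"]) auto
qed simp

lemma Int_stable_vimage:
  assumes "Int_stable R"
  shows "Int_stable {f -` r \<inter> \<Omega> | r. r \<in> R}"
proof (rule Int_stableI, elim CollectE exE conjE)
  fix e e' r r' assume "e = f -` r \<inter> \<Omega>" "r \<in> R" "e' = f -` r' \<inter> \<Omega>" "r' \<in> R"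
  then show "e \<inter> e' \<in> {f -` r \<inter> \<Omega> | r. r \<in> R}"
    using Int_stableD[OF assms] by (intro CollectI exI[of _ "r \<inter> r'"]) auto
qed

context prob_space
begin

lemma indep_rv_eq:
  "indep_rv M N1 X N2 Y \<longleftrightarrow> random_variable N1 X \<and> random_variable N2 Y \<and>
     indep_set (sigma_sets (space M) {X -` A \<inter> space M | A. A \<in> sets N1})
               (sigma_sets (space M) {Y -` A \<inter> space M | A. A \<in> sets N2})"
  unfolding indep_rv_def sets_vimage_algebra ..

lemma indep_rv_iff_indep_var: "indep_rv M N1 X N2 Y \<longleftrightarrow> indep_var N1 X N2 Y"
  unfolding indep_rv_eq indep_var_eq by auto

lemma indep_rv_commute:
  assumes "indep_rv M N1 X N2 Y"
  shows "indep_rv M N2 Y N1 X"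
proof -
  have "indep_set B A" if "indep_set A B" for A B
    using that unfolding indep_sets2_eq by (metis Int_commute mult.commute)
  then show ?thesis
    using assms unfolding indep_rv_def by blast
qed

lemma indep_rvD:
  assumes "indep_rv M N1 X N2 Y" "a \<in> sets N1" "b \<in> sets N2"
  shows "prob (X -` a \<inter> Y -` b \<inter> space M) = prob (X -` a \<inter> space M) * prob (Y -` b \<inter> space M)"
proof -
  have "prob ((X -` a \<inter> space M) \<inter> (Y -` b \<inter> space M)) = prob (X -` a \<inter> space M) * prob (Y -` b \<inter> space M)"
    using assms unfolding indep_rv_def indep_sets2_eq by (blast intro: in_vimage_algebra)
  then show ?thesis
    by (simp add: Int_ac)
qed

lemma indep_rv_mono:
  assumes "indep_rv M N1 X N2 Y" "random_variable N1' X'" "random_variable N2' Y'"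
    and "sets (vimage_algebra (space M) X' N1') \<subseteq> sets (vimage_algebra (space M) X N1)"
    and "sets (vimage_algebra (space M) Y' N2') \<subseteq> sets (vimage_algebra (space M) Y N2)"
  shows "indep_rv M N1' X' N2' Y'"
proof -
  have "indep_set (sets (vimage_algebra (space M) X N1)) (sets (vimage_algebra (space M) Y N2))"
    using assms(1) unfolding indep_rv_def by blast
  then have "indep_set (sets (vimage_algebra (space M) X' N1')) (sets (vimage_algebra (space M) Y' N2'))"
    unfolding indep_set_def by (rule indep_sets_mono_sets) (use assms(4,5) in \<open>auto split: bool.split\<close>)
  then show ?thesis
    using assms(2,3) unfolding indep_rv_def by blast
qed

lemma indep_rv_compose:
  assumes ind: "indep_rv M N1 X N2 Y" and f: "f \<in> measurable N1 N1'" and g: "g \<in> measurable N2 N2'"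
    and X': "\<And>\<omega>. \<omega> \<in> space M \<Longrightarrow> X' \<omega> = f (X \<omega>)"
    and Y': "\<And>\<omega>. \<omega> \<in> space M \<Longrightarrow> Y' \<omega> = g (Y \<omega>)"
  shows "indep_rv M N1' X' N2' Y'"
proof -
  have X: "random_variable N1 X" and Y: "random_variable N2 Y"
    using ind unfolding indep_rv_def by auto
  have "random_variable N1' X'"
    using measurable_comp[OF X f] X' by (simp add: comp_def cong: measurable_cong)
  moreover have "random_variable N2' Y'"
    using measurable_comp[OF Y g] Y' by (simp add: comp_def cong: measurable_cong)
  ultimately show ?thesis
    using sets_vimage_algebra_compose[OF X f X'] sets_vimage_algebra_compose[OF Y g Y']
    by (rule indep_rv_mono[OF ind])
qed

lemma indep_var_AE_cong:
  assumes "indep_var N X N Y" "random_variable N X'" "random_variable N Y'"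
    and "AE \<omega> in M. X \<omega> = X' \<omega>" "AE \<omega> in M. Y \<omega> = Y' \<omega>"
  shows "indep_var N X' N Y'"
proof -
  have X: "random_variable N X" and Y: "random_variable N Y"
    using assms(1) by (rule indep_var_rv1, rule indep_var_rv2)
  have "AE \<omega> in M. (X \<omega>, Y \<omega>) = (X' \<omega>, Y' \<omega>)"
    using assms(4,5) by eventually_elim simp
  then have "distr M (N \<Otimes>\<^sub>M N) (\<lambda>\<omega>. (X \<omega>, Y \<omega>)) = distr M (N \<Otimes>\<^sub>M N) (\<lambda>\<omega>. (X' \<omega>, Y' \<omega>))"
    using measurable_Pair[OF X Y] measurable_Pair[OF assms(2,3)] by (intro distr_cong_AE) auto
  moreover have "distr M N X = distr M N X'" "distr M N Y = distr M N Y'"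
    using X Y assms(2-5) by (auto intro!: distr_cong_AE)
  ultimately show ?thesis
    using assms(1-3) unfolding indep_var_distribution_eq by metis
qed

lemma indep_rv_pair_right:
  assumes XY: "indep_rv M N1 X N2 Y"
    and XYZ: "indep_rv M (N1 \<Otimes>\<^sub>M N2) (\<lambda>\<omega>. (X \<omega>, Y \<omega>)) N3 Z"
  shows "indep_rv M N1 X (N2 \<Otimes>\<^sub>M N3) (\<lambda>\<omega>. (Y \<omega>, Z \<omega>))"
proof -
  have X: "random_variable N1 X" and Y: "random_variable N2 Y" and Z: "random_variable N3 Z"
    using XY XYZ unfolding indep_rv_def by auto
  have prob_triple: "prob (X -` a \<inter> Y -` b \<inter> Z -` c \<inter> space M)
      = prob (X -` a \<inter> space M) * prob (Y -` b \<inter> space M) * prob (Z -` c \<inter> space M)"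
    if abc: "a \<in> sets N1" "b \<in> sets N2" "c \<in> sets N3" for a b c
  proof -
    have "prob (X -` a \<inter> Y -` b \<inter> Z -` c \<inter> space M)
        = prob ((\<lambda>\<omega>. (X \<omega>, Y \<omega>)) -` (a \<times> b) \<inter> Z -` c \<inter> space M)"
      by (auto intro!: arg_cong[where f=prob])
    also have "\<dots> = prob ((\<lambda>\<omega>. (X \<omega>, Y \<omega>)) -` (a \<times> b) \<inter> space M) * prob (Z -` c \<inter> space M)"
      using abc by (intro indep_rvD[OF XYZ]) auto
    also have "(\<lambda>\<omega>. (X \<omega>, Y \<omega>)) -` (a \<times> b) \<inter> space M = X -` a \<inter> Y -` b \<inter> space M"
      by auto
    finally show ?thesis
      using abc by (simp add: indep_rvD[OF XY])
  qed
  let ?W = "\<lambda>\<omega>. (Y \<omega>, Z \<omega>)"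
  define G where "G = {?W -` r \<inter> space M | r. r \<in> {b \<times> c | b c. b \<in> sets N2 \<and> c \<in> sets N3}}"
  have "indep_set {X -` a \<inter> space M | a. a \<in> sets N1} G"
    unfolding indep_sets2_eq
  proof (intro conjI ballI)
    fix e1 e2 assume "e1 \<in> {X -` a \<inter> space M | a. a \<in> sets N1}" "e2 \<in> G"
    then obtain a b c where abc: "a \<in> sets N1" "b \<in> sets N2" "c \<in> sets N3"
      and e: "e1 = X -` a \<inter> space M" "e2 = Y -` b \<inter> Z -` c \<inter> space M"
      unfolding G_def by auto
    have "X -` space N1 \<inter> space M = space M"
      using measurable_space[OF X] by auto
    moreover have "X -` space N1 \<inter> Y -` b \<inter> Z -` c \<inter> space M = e2"
      using e measurable_space[OF X] by auto
    ultimately have "prob e2 = prob (Y -` b \<inter> space M) * prob (Z -` c \<inter> space M)"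
      using prob_triple[of "space N1" b c] abc by (simp add: prob_space)
    moreover have "e1 \<inter> e2 = X -` a \<inter> Y -` b \<inter> Z -` c \<inter> space M"
      using e by auto
    ultimately show "prob (e1 \<inter> e2) = prob e1 * prob e2"
      using prob_triple[OF abc] e by (simp add: mult.assoc)
  qed (use X Y Z in \<open>auto simp: G_def\<close>)
  then have "indep_set (sigma_sets (space M) {X -` a \<inter> space M | a. a \<in> sets N1}) (sigma_sets (space M) G)"
    unfolding G_def
    by (intro indep_set_sigma_sets Int_stable_vimage sets.Int_stable Int_stable_pair_measure_generator)
  moreover have "sigma_sets (space M) {?W -` d \<inter> space M | d. d \<in> sets (N2 \<Otimes>\<^sub>M N3)} = sigma_sets (space M) G"
  proof -
    have "?W \<in> space M \<rightarrow> space N2 \<times> space N3"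
      using measurable_space[OF Y] measurable_space[OF Z] by auto
    then have "{?W -` d \<inter> space M | d. d \<in> sets (N2 \<Otimes>\<^sub>M N3)} = sigma_sets (space M) G"
      unfolding G_def sets_pair_measure by (rule sigma_sets_vimage_commute)
    moreover have "G \<subseteq> Pow (space M)"
      unfolding G_def by auto
    ultimately show ?thesis
      by (simp add: sigma_sets_sigma_sets_eq)
  qed
  ultimately show ?thesis
    unfolding indep_rv_eq using X measurable_Pair[OF Y Z] by simp
qed

lemma real_cond_exp_indep:
  assumes ind: "indep_rv M N X borel Y" and Y: "integrable M Y"
  shows "AE \<omega> in M. real_cond_exp M (vimage_algebra (space M) X N) Y \<omega> = expectation Y"
proof -
  let ?F = "vimage_algebra (space M) X N"
  have X: "random_variable N X"
    using ind unfolding indep_rv_def by auto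
  have "subalgebra M ?F"
    unfolding subalgebra_def using sets_image_in_sets[of M "space M" X N] X by simp
  then interpret finite_measure_subalgebra M ?F
    by unfold_locales
  show ?thesis
  proof (rule real_cond_exp_charact)
    fix A assume "A \<in> sets ?F"
    moreover have "X \<in> space M \<rightarrow> space N"
      using measurable_space[OF X] by auto
    ultimately obtain B where B: "B \<in> sets N" and A: "A = X -` B \<inter> space M"
      using sets_vimage_algebra2[of X "space M" N] by auto
    have "indep_var borel (\<lambda>\<omega>. indicator B (X \<omega>)) borel Y"
      unfolding indep_rv_iff_indep_var[symmetric]
      by (rule indep_rv_compose[OF ind, where f="indicator B" and g=id]) (use B in auto)
    moreover have "integrable M (\<lambda>\<omega>. indicator B (X \<omega>) :: real)"
      using B X by (intro integrable_const_bound[where B=1]) auto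
    ultimately have product: "(\<integral>\<omega>. indicator B (X \<omega>) * Y \<omega> \<partial>M) = (\<integral>\<omega>. indicator B (X \<omega>) \<partial>M) * expectation Y"
      using Y by (rule indep_var_lebesgue_integral)
    have "(\<integral>\<omega>\<in>A. Y \<omega> \<partial>M) = (\<integral>\<omega>. indicator B (X \<omega>) * Y \<omega> \<partial>M)"
      unfolding set_lebesgue_integral_def A
      by (intro Bochner_Integration.integral_cong) (auto simp: indicator_def)
    also have "\<dots> = (\<integral>\<omega>. indicator B (X \<omega>) * expectation Y \<partial>M)"
      using product by simp
    also have "\<dots> = (\<integral>\<omega>\<in>A. expectation Y \<partial>M)"
      unfolding set_lebesgue_integral_def A
      by (intro Bochner_Integration.integral_cong) (auto simp: indicator_def)
    finally show "(\<integral>\<omega>\<in>A. Y \<omega> \<partial>M) = (\<integral>\<omega>\<in>A. expectation Y \<partial>M)" .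
  qed (simp_all add: Y)
qed

lemma exists_null_value:
  fixes X :: "'a \<Rightarrow> real"
  assumes X: "random_variable borel X"
  shows "\<exists>x. prob (X -` {x} \<inter> space M) = 0"
proof -
  interpret D: prob_space "distr M borel X"
    using X by (rule prob_space_distr)
  have "{x. measure (distr M borel X) {x} \<noteq> 0} \<noteq> UNIV"
    using D.countable_support uncountable_UNIV_real by auto
  then obtain x where "measure (distr M borel X) {x} = 0"
    by auto
  then show ?thesis
    using X by (auto simp: measure_distr)
qed

lemma obtain_nonzero_AE_eq:
  fixes X :: "'a \<Rightarrow> real" and g :: "real \<Rightarrow> real"
  assumes X: "random_variable borel X" and g: "g \<in> borel_measurable borel"
  obtains l where "l \<in> borel_measurable borel" "l \<noteq> (\<lambda>_. 0)" "AE \<omega> in M. l (X \<omega>) = g (X \<omega>)"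
proof (cases "g = (\<lambda>_. 0)")
  case True
  obtain x where "prob (X -` {x} \<inter> space M) = 0"
    using exists_null_value[OF X] by blast
  then have "AE \<omega> in M. X \<omega> \<noteq> x"
    by (intro AE_I[of _ _ "X -` {x} \<inter> space M"]) (auto simp: emeasure_eq_measure intro: measurable_sets[OF X])
  then have "AE \<omega> in M. indicator {x} (X \<omega>) = g (X \<omega>)"
    by eventually_elim (simp add: True)
  moreover have "indicator {x} \<noteq> (\<lambda>_. 0 :: real)"
    by (metis indicator_simps(1) singletonI zero_neq_one)
  ultimately show ?thesis
    by (intro that[of "indicator {x}"]) auto
qed (use g in auto)

lemma AB_criterionI:
  assumes l: "l \<in> borel_measurable borel" "l \<noteq> (\<lambda>_. 0)"
    and st: "st \<in> borel_measurable M" and act: "act \<in> borel_measurable M"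
    and ind: "indep_var borel sk borel R" and R: "integrable M R" "expectation R = 0"
    and residual: "AE \<omega> in M. act \<omega> - l (st \<omega>) = R \<omega>"
  shows "AB_criterion M st act sk"
proof -
  have meas: "(\<lambda>\<omega>. act \<omega> - l (st \<omega>)) \<in> borel_measurable M"
    using measurable_compose[OF st l(1)] act by simp
  have int: "integrable M (\<lambda>\<omega>. act \<omega> - l (st \<omega>))"
    using integrable_cong_AE[OF meas _ residual] R by (auto dest: borel_measurable_integrable)
  have "expectation (\<lambda>\<omega>. act \<omega> - l (st \<omega>)) = 0"
    using integral_cong_AE[OF meas _ residual] R by (auto dest: borel_measurable_integrable)
  moreover have ind_residual: "indep_var borel sk borel (\<lambda>\<omega>. act \<omega> - l (st \<omega>))"
  proof (rule indep_var_AE_cong[OF ind])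
    show "random_variable borel sk"
      using ind by (rule indep_var_rv1)
    show "AE \<omega> in M. R \<omega> = act \<omega> - l (st \<omega>)"
      using residual by eventually_elim simp
  qed (simp_all add: meas)
  ultimately show ?thesis
    using real_cond_exp_indep[OF ind_residual[folded indep_rv_iff_indep_var] int] l int
    unfolding AB_criterion_def by auto
qed

end

definition conf_window :: "nat \<Rightarrow> nat \<Rightarrow> (int \<Rightarrow> real) \<Rightarrow> nat \<Rightarrow> real" where
  "conf_window \<tau> j v = (\<lambda>i\<in>{..\<tau>}. v (int j - int i))"

lemma conf_block_eq_conf_window: "conf_block u \<tau> j \<omega> = conf_window \<tau> j (\<lambda>i. u i \<omega>)"
  unfolding conf_block_def conf_window_def ..

lemma measurable_conf_window: "conf_window \<tau> j \<in> measurable (PiM UNIV (\<lambda>_. borel)) (conf_space \<tau>)"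
  unfolding conf_window_def conf_space_def by measurable

text \<open>The structural equations unrolled: \<open>state_fun P \<pi> h \<tau> j (e, v)\<close> is \<open>s\<^sub>j\<close> computed from
  the noises \<open>e (Inl i) = e\<^sub>s\<^sub>i\<close>, \<open>e (Inr i) = e\<^sub>a\<^sub>i\<close> and the confounder path \<open>v i = u\<^sub>i\<close>.\<close>

fun state_fun ::
  "(real \<Rightarrow> real \<Rightarrow> real) \<Rightarrow> (real \<Rightarrow> real) \<Rightarrow> ((nat \<Rightarrow> real) \<Rightarrow> real) \<Rightarrow> nat \<Rightarrow> nat
    \<Rightarrow> (nat + nat \<Rightarrow> real) \<times> (int \<Rightarrow> real) \<Rightarrow> real" where
  "state_fun P \<pi> h \<tau> 0 w = fst w (Inl 0)"
| "state_fun P \<pi> h \<tau> (Suc j) w =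
     P (state_fun P \<pi> h \<tau> j w) (\<pi> (state_fun P \<pi> h \<tau> j w) + h (conf_window \<tau> j (snd w)) + fst w (Inr j))
       + fst w (Inl (Suc j))"

lemma measurable_state_fun:
  assumes P: "(\<lambda>(x, y). P x y) \<in> borel_measurable borel"
    and \<pi>: "\<pi> \<in> borel_measurable borel"
    and h: "h \<in> borel_measurable (conf_space \<tau>)"
    and "j \<le> t"
  shows "state_fun P \<pi> h \<tau> j \<in> borel_measurable (PiM (- {Inr t}) (\<lambda>_. borel) \<Otimes>\<^sub>M PiM UNIV (\<lambda>_. borel))"
  using \<open>j \<le> t\<close>
proof (induction j)
  case 0
  then show ?case by simp
next
  case (Suc j)
  let ?N = "PiM (- {Inr t}) (\<lambda>_. borel) \<Otimes>\<^sub>M PiM UNIV (\<lambda>_. borel)"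
  note [measurable] = \<pi> h measurable_conf_window
  have IH[measurable]: "state_fun P \<pi> h \<tau> j \<in> borel_measurable ?N"
    using Suc by simp
  have "Inr j \<in> - {Inr t}"
    using Suc by simp
  then have action: "(\<lambda>w. \<pi> (state_fun P \<pi> h \<tau> j w) + h (conf_window \<tau> j (snd w)) + fst w (Inr j))
      \<in> borel_measurable ?N"
    by measurable
  have P2: "(\<lambda>x. P (fst x) (snd x)) \<in> borel_measurable (borel \<Otimes>\<^sub>M borel)"
    using P by (simp add: borel_prod case_prod_beta')
  have "(\<lambda>w. P (state_fun P \<pi> h \<tau> j w)
      (\<pi> (state_fun P \<pi> h \<tau> j w) + h (conf_window \<tau> j (snd w)) + fst w (Inr j))) \<in> borel_measurable ?N"
    using measurable_comp[OF measurable_Pair[OF IH action] P2] by (simp add: comp_def)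
  then show ?case
    by simp
qed

locale c2l_model = prob_space M
  for M :: "'a measure" +
  fixes s a :: "nat \<Rightarrow> 'a \<Rightarrow> real"
    and u :: "int \<Rightarrow> 'a \<Rightarrow> real"
    and es ea :: "nat \<Rightarrow> 'a \<Rightarrow> real"
    and P :: "real \<Rightarrow> real \<Rightarrow> real"
    and \<pi> :: "real \<Rightarrow> real"
    and h :: "(nat \<Rightarrow> real) \<Rightarrow> real"
    and \<tau> :: nat
  assumes meas_u: "\<And>j. u j \<in> borel_measurable M"
    and meas_es: "\<And>j. es j \<in> borel_measurable M"
    and meas_ea: "\<And>j. ea j \<in> borel_measurable M"
    and meas_P: "(\<lambda>(x, y). P x y) \<in> borel_measurable borel"
    and meas_pi: "\<pi> \<in> borel_measurable borel"
    and meas_h: "h \<in> borel_measurable (conf_space \<tau>)"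
    and init: "\<And>\<omega>. \<omega> \<in> space M \<Longrightarrow> s 0 \<omega> = es 0 \<omega>"
    and eq_s: "\<And>j \<omega>. \<omega> \<in> space M \<Longrightarrow> s (Suc j) \<omega> = P (s j \<omega>) (a j \<omega>) + es (Suc j) \<omega>"
    and eq_a: "\<And>j \<omega>. \<omega> \<in> space M \<Longrightarrow> a j \<omega> = \<pi> (s j \<omega>) + h (conf_block u \<tau> j \<omega>) + ea j \<omega>"
    and noise_indep: "indep_vars (\<lambda>_. borel) (case_sum es ea) UNIV"
    and noise_conf_indep: "indep_rv M
          (PiM UNIV (\<lambda>_. borel)) (\<lambda>\<omega> i. case_sum es ea i \<omega>)
          (PiM UNIV (\<lambda>_. borel)) (\<lambda>\<omega> j. u j \<omega>)"
begin

definition noise_except :: "nat \<Rightarrow> 'a \<Rightarrow> nat + nat \<Rightarrow> real" where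
  "noise_except t \<omega> = restrict (\<lambda>i. case_sum es ea i \<omega>) (- {Inr t})"

lemma state_eq_state_fun:
  assumes "\<omega> \<in> space M" "j \<le> t"
  shows "s j \<omega> = state_fun P \<pi> h \<tau> j (noise_except t \<omega>, \<lambda>i. u i \<omega>)"
  using \<open>j \<le> t\<close>
proof (induction j)
  case 0
  then show ?case
    using init[OF assms(1)] by (simp add: noise_except_def)
next
  case (Suc j)
  then show ?case
    using eq_s[OF assms(1), of j] eq_a[OF assms(1), of j]
    by (simp add: noise_except_def conf_block_eq_conf_window)
qed

lemma action_noise_indep_history:
  "indep_rv M borel (ea t) (PiM (- {Inr t}) (\<lambda>_. borel) \<Otimes>\<^sub>M PiM UNIV (\<lambda>_. borel))
     (\<lambda>\<omega>. (noise_except t \<omega>, \<lambda>j. u j \<omega>))"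
proof (rule indep_rv_pair_right)
  have "indep_rv M (PiM {Inr t} (\<lambda>_. borel)) (\<lambda>\<omega>. restrict (\<lambda>i. case_sum es ea i \<omega>) {Inr t})
      (PiM (- {Inr t}) (\<lambda>_. borel)) (noise_except t)"
    unfolding indep_rv_iff_indep_var noise_except_def
    by (rule indep_var_restrict[OF noise_indep]) auto
  then show "indep_rv M borel (ea t) (PiM (- {Inr t}) (\<lambda>_. borel)) (noise_except t)"
    by (rule indep_rv_compose[where f="\<lambda>e. e (Inr t)" and g=id]) simp_all
  show "indep_rv M (borel \<Otimes>\<^sub>M PiM (- {Inr t}) (\<lambda>_. borel)) (\<lambda>\<omega>. (ea t \<omega>, noise_except t \<omega>))
      (PiM UNIV (\<lambda>_. borel)) (\<lambda>\<omega> j. u j \<omega>)"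
  proof (rule indep_rv_compose[OF noise_conf_indep, where f="\<lambda>e. (e (Inr t), restrict e (- {Inr t}))" and g=id])
    show "(\<lambda>e. (e (Inr t), restrict e (- {Inr t})))
        \<in> measurable (PiM UNIV (\<lambda>_. borel)) (borel \<Otimes>\<^sub>M PiM (- {Inr t}) (\<lambda>_. borel))"
      by measurable
  qed (simp_all add: noise_except_def)
qed

lemma action_noise_indep_state_conf:
  assumes "k < t"
  shows "indep_rv M (borel \<Otimes>\<^sub>M conf_space \<tau>) (\<lambda>\<omega>. (s k \<omega>, conf_block u \<tau> t \<omega>)) borel (ea t)"
proof (rule indep_rv_commute, rule indep_rv_compose[OF action_noise_indep_history measurable_ident])
  show "(\<lambda>w. (state_fun P \<pi> h \<tau> k w, conf_window \<tau> t (snd w)))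
      \<in> measurable (PiM (- {Inr t}) (\<lambda>_. borel) \<Otimes>\<^sub>M PiM UNIV (\<lambda>_. borel)) (borel \<Otimes>\<^sub>M conf_space \<tau>)"
    using measurable_state_fun[OF meas_P meas_pi meas_h, of k t] assms measurable_conf_window
    by (auto intro!: measurable_Pair)
qed (use assms in \<open>auto simp: state_eq_state_fun conf_block_eq_conf_window\<close>)

end

theorem theorem1:
  fixes M :: "'a measure"
    and s a :: "nat \<Rightarrow> 'a \<Rightarrow> real"
    and u :: "int \<Rightarrow> 'a \<Rightarrow> real"
    and es ea :: "nat \<Rightarrow> 'a \<Rightarrow> real"
    and P :: "real \<Rightarrow> real \<Rightarrow> real"
    and \<pi> :: "real \<Rightarrow> real"
    and h :: "(nat \<Rightarrow> real) \<Rightarrow> real"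
    and \<tau> k t :: nat
  assumes prob: "prob_space M"
    and tau: "\<tau> \<ge> 1"
    and kt: "k < t"
    and meas_s: "\<And>j. s j \<in> borel_measurable M"
    and meas_a: "\<And>j. a j \<in> borel_measurable M"
    and meas_u: "\<And>j. u j \<in> borel_measurable M"
    and meas_es: "\<And>j. es j \<in> borel_measurable M"
    and meas_ea: "\<And>j. ea j \<in> borel_measurable M"
    and meas_P: "(\<lambda>(x, y). P x y) \<in> borel_measurable borel"
    and meas_pi: "\<pi> \<in> borel_measurable borel"
    and meas_h: "h \<in> borel_measurable (conf_space \<tau>)"
    and init: "\<And>\<omega>. \<omega> \<in> space M \<Longrightarrow> s 0 \<omega> = es 0 \<omega>"
    and eq_s: "\<And>j \<omega>. \<omega> \<in> space M \<Longrightarrow> s (Suc j) \<omega> = P (s j \<omega>) (a j \<omega>) + es (Suc j) \<omega>"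
    and eq_a: "\<And>j \<omega>. \<omega> \<in> space M \<Longrightarrow> a j \<omega> = \<pi> (s j \<omega>) + h (conf_block u \<tau> j \<omega>) + ea j \<omega>"
    and noise_indep: "prob_space.indep_vars M (\<lambda>_. borel) (case_sum es ea) UNIV"
    and noise_conf_indep: "indep_rv M
          (PiM UNIV (\<lambda>_. borel)) (\<lambda>\<omega> i. case_sum es ea i \<omega>)
          (PiM UNIV (\<lambda>_. borel)) (\<lambda>\<omega> j. u j \<omega>)"
    and int_h: "integrable M (\<lambda>\<omega>. h (conf_block u \<tau> t \<omega>))"
    and int_ea: "integrable M (ea t)"
    and dens_sk: "smooth_pos_density M (s k)"
    and dens_u: "\<And>j. smooth_pos_density M (u j)"
    and IV: "valid_IV M s u \<tau> k t"
  shows "AB_criterion M (s t) (a t) (s k)"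
proof -
  interpret c2l_model M s a u es ea P \<pi> h \<tau>
    using prob meas_u meas_es meas_ea meas_P meas_pi meas_h init eq_s eq_a noise_indep noise_conf_indep
    by (intro c2l_model.intro c2l_model_axioms.intro) assumption+
  have sk_indep: "indep_rv M borel (s k) (conf_space \<tau> \<Otimes>\<^sub>M borel) (\<lambda>\<omega>. (conf_block u \<tau> t \<omega>, ea t \<omega>))"
    using IV action_noise_indep_state_conf[OF kt] unfolding valid_IV_def
    by (intro indep_rv_pair_right) auto
  define c where "c = expectation (\<lambda>\<omega>. h (conf_block u \<tau> t \<omega>) + ea t \<omega>)"
  define R where "R = (\<lambda>\<omega>. h (conf_block u \<tau> t \<omega>) + ea t \<omega> - c)"
  have indep_R: "indep_var borel (s k) borel R"
    unfolding indep_rv_iff_indep_var[symmetric]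
    by (rule indep_rv_compose[OF sk_indep measurable_ident, where g="\<lambda>(v, e). h v + e - c"])
      (use meas_h in \<open>auto simp: R_def\<close>)
  have int_R: "integrable M R"
    using int_h int_ea by (simp add: R_def)
  have mean_R: "expectation R = 0"
    using int_h int_ea by (simp add: R_def c_def prob_space)
  obtain l where l: "l \<in> borel_measurable borel" "l \<noteq> (\<lambda>_. 0)"
    and l_eq: "AE \<omega> in M. l (s t \<omega>) = \<pi> (s t \<omega>) + c"
    using obtain_nonzero_AE_eq[OF meas_s[of t], of "\<lambda>x. \<pi> x + c"] meas_pi by auto
  have "AE \<omega> in M. a t \<omega> - l (s t \<omega>) = R \<omega>"
    using AE_space l_eq by eventually_elim (simp add: R_def eq_a)
  then show ?thesis
    by (rule AB_criterionI[OF l meas_s meas_a indep_R int_R mean_R])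
qed

end
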